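(* Let $A,B$ be nonempty persistence diagrams, $\Theta(c)=d_\infty(cA,B)$, and let $a^{(m)}=(a^{(m)}_x,a^{(m)}_y)$ be a point of $\chi(A)$ with the largest $y$-coordinate among points of $\chi(A)$. If $$c\ge \max\Big\{\frac{2\,\mathrm{bd}(B)}{a^{(m)}_x+a^{(m)}_y},\ \frac{\mathrm{pers}(B)}{\mathrm{pers}(A)}\Big\},$$ then $\Theta(c)=c\cdot\mathrm{pers}(A)$.
   Context: A persistence diagram is a finite multiset of points $a=(a_x,a_y)$ with $0\le a_x<a_y<\infty$ together with the diagonal $\Delta$ of infinite multiplicity; nonempty means it has at least one such point. $d_\infty$ is the bottleneck distance (infimum over multi-bijections between $A\cup\Delta$ and $B\cup\Delta$ of the maximal $\ell^\infty$ distance; matching $a$ to $\Delta$ costs $\mathrm{pers}(a)$). $cA=\{(ca_x,ca_y)\}$ for $c>0$. $\mathrm{pers}(a)=(a_y-a_x)/2$; $\mathrm{pers}(A)=\max_{a\in A}\mathrm{pers}(a)$; $\chi(A)$ is the multiset of points of $A$ with persistence equal to $\mathrm{pers}(A)$; $\mathrm{bd}(A)=\max_{a\in A}a_y$. *)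

theory Defs
  imports "HOL-Analysis.Analysis" "HOL-Library.Multiset"
begin

type_synonym pt = "real \<times> real"

text \<open>A persistence diagram: finite multiset of off-diagonal points (x,y) with 0 <= x < y
  (the diagonal, of infinite multiplicity, is implicit).\<close>
definition is_diagram :: "pt multiset \<Rightarrow> bool" where
  "is_diagram A \<longleftrightarrow> (\<forall>a\<in>#A. 0 \<le> fst a \<and> fst a < snd a)"

definition linf :: "pt \<Rightarrow> pt \<Rightarrow> real" where
  "linf p q = max \<bar>fst p - fst q\<bar> \<bar>snd p - snd q\<bar>"

definition pers :: "pt \<Rightarrow> real" where
  "pers a = (snd a - fst a) / 2"

definition persD :: "pt multiset \<Rightarrow> real" where
  "persD A = Max (pers ` set_mset A)"

definition chi :: "pt multiset \<Rightarrow> pt multiset" where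
  "chi A = filter_mset (\<lambda>a. pers a = persD A) A"

definition bd :: "pt multiset \<Rightarrow> real" where
  "bd A = Max (snd ` set_mset A)"

definition scaleD :: "real \<Rightarrow> pt multiset \<Rightarrow> pt multiset" where
  "scaleD c A = image_mset (\<lambda>a. (c * fst a, c * snd a)) A"

text \<open>A multi-bijection between A \<union> \<Delta> and B \<union> \<Delta> is determined by the multiset M of
  pairs of off-diagonal points matched to each other; all remaining points of A and B
  are matched to the diagonal (cost pers), and diagonal-to-diagonal pairs cost 0.\<close>
definition is_matching :: "pt multiset \<Rightarrow> pt multiset \<Rightarrow> (pt \<times> pt) multiset \<Rightarrow> bool" where
  "is_matching A B M \<longleftrightarrow> image_mset fst M \<subseteq># A \<and> image_mset snd M \<subseteq># B"

definition match_cost :: "pt multiset \<Rightarrow> pt multiset \<Rightarrow> (pt \<times> pt) multiset \<Rightarrow> real" where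
  "match_cost A B M = Max (insert 0
      ((\<lambda>p. linf (fst p) (snd p)) ` set_mset M
       \<union> pers ` set_mset (A - image_mset fst M)
       \<union> pers ` set_mset (B - image_mset snd M)))"

definition bottleneck :: "pt multiset \<Rightarrow> pt multiset \<Rightarrow> real" where
  "bottleneck A B = Inf {match_cost A B M | M. is_matching A B M}"

end

theory Submission
  imports Defs
begin

text \<open>Let \<open>a\<close> be the rescaled point \<open>c a\<^sup>m\<close>, so \<open>pers a = c pers(A)\<close>. The bound on \<open>c\<close> puts
  every point of \<open>B\<close> below the height \<open>(a\<^sub>x + a\<^sub>y)/2\<close>, hence at \<open>\<ell>\<^sup>\<infinity>\<close>-distance at least
  \<open>pers a\<close> from \<open>a\<close>; so every matching costs at least \<open>pers a\<close>, whether it matches \<open>a\<close> to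
  a point of \<open>B\<close> or to the diagonal. Conversely, matching everything to the diagonal costs
  \<open>max (c pers(A)) pers(B) = c pers(A)\<close>.\<close>

lemma pers_le_persD: "a \<in># A \<Longrightarrow> pers a \<le> persD A"
  unfolding persD_def by (rule Max_ge) auto

lemma snd_le_bd: "b \<in># B \<Longrightarrow> snd b \<le> bd B"
  unfolding bd_def by (rule Max_ge) auto

lemma pers_scale: "pers (c * fst a, c * snd a) = c * pers a"
  by (simp add: pers_def algebra_simps)

lemma pers_le_linf_if_below_midpoint:
  assumes "snd b \<le> (fst a + snd a) / 2"
  shows "pers a \<le> linf a b"
proof -
  have "snd a - snd b \<le> linf a b" by (simp add: linf_def)
  then show ?thesis using assms by (simp add: pers_def)
qed

lemma match_cost_ge_linf:
  "p \<in># M \<Longrightarrow> linf (fst p) (snd p) \<le> match_cost A B M"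
  unfolding match_cost_def by (rule Max_ge) auto

lemma match_cost_ge_unmatched:
  "a \<in># A - image_mset fst M \<Longrightarrow> pers a \<le> match_cost A B M"
  unfolding match_cost_def by (rule Max_ge) auto

lemma match_cost_empty_le:
  assumes "0 \<le> r" "\<forall>a\<in>#A. pers a \<le> r" "\<forall>b\<in>#B. pers b \<le> r"
  shows "match_cost A B {#} \<le> r"
  using assms unfolding match_cost_def by (subst Max_le_iff) auto

lemma match_cost_ge_isolated_point:
  assumes M: "is_matching A B M" and a: "a \<in># A"
    and diag: "r \<le> pers a" and far: "\<forall>b\<in>#B. r \<le> linf a b"
  shows "r \<le> match_cost A B M"
proof (cases "a \<in># image_mset fst M")
  case True
  then obtain p where p: "p \<in># M" "fst p = a" by auto
  have "snd p \<in># image_mset snd M" using p(1) by simp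
  then have "snd p \<in># B" using M unfolding is_matching_def by (meson mset_subset_eqD)
  then have "r \<le> linf (fst p) (snd p)" using far p(2) by simp
  also have "\<dots> \<le> match_cost A B M" using p(1) by (rule match_cost_ge_linf)
  finally show ?thesis .
next
  case False
  then have "count (image_mset fst M) a = 0" by (simp add: count_eq_zero_iff)
  then have "a \<in># A - image_mset fst M" using a by (simp add: in_diff_count)
  then show ?thesis using diag match_cost_ge_unmatched by (meson order_trans)
qed

lemma bottleneck_eqI:
  assumes "is_matching A B M\<^sub>0" "match_cost A B M\<^sub>0 = r"
    and "\<And>M. is_matching A B M \<Longrightarrow> r \<le> match_cost A B M"
  shows "bottleneck A B = r"
  unfolding bottleneck_def using assms by (intro cInf_eq_minimum) auto

lemma bottleneck_eq_pers_of_isolated_point: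
  assumes "0 \<le> r" and a: "a \<in># A" "pers a = r" and far: "\<forall>b\<in>#B. r \<le> linf a b"
    and persA: "\<forall>a'\<in>#A. pers a' \<le> r" and persB: "\<forall>b\<in>#B. pers b \<le> r"
  shows "bottleneck A B = r"
proof -
  have lower: "r \<le> match_cost A B M" if "is_matching A B M" for M
    using match_cost_ge_isolated_point[OF that a(1)] a(2) far by simp
  have "match_cost A B {#} \<le> r" using assms(1) persA persB by (rule match_cost_empty_le)
  then have "match_cost A B {#} = r" using lower[of "{#}"] by (simp add: is_matching_def)
  then show ?thesis using lower by (intro bottleneck_eqI[of _ _ "{#}"]) (auto simp: is_matching_def)
qed

theorem mainTheorem7:
  fixes A B :: "pt multiset" and am :: pt and c :: real
  assumes "is_diagram A" and "is_diagram B"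
    and "A \<noteq> {#}" and "B \<noteq> {#}"
    and "am \<in># chi A"
    and "\<forall>a\<in>#chi A. snd a \<le> snd am"
    and "c > 0"
    and "c \<ge> max (2 * bd B / (fst am + snd am)) (persD B / persD A)"
  shows "bottleneck (scaleD c A) B = c * persD A"
proof -
  have am: "am \<in># A" "pers am = persD A" using assms(5) by (auto simp: chi_def)
  have "0 \<le> fst am" "fst am < snd am" using assms(1) am(1) by (auto simp: is_diagram_def)
  then have pos: "0 < persD A" "0 < fst am + snd am" using am(2) by (auto simp: pers_def)
  have persB: "persD B \<le> c * persD A" and bdB: "bd B \<le> c * (fst am + snd am) / 2"
    using assms(8) pos by (auto simp: divide_le_eq mult.commute)
  define cam where "cam = (c * fst am, c * snd am)"
  show ?thesis
  proof (rule bottleneck_eq_pers_of_isolated_point)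
    show "0 \<le> c * persD A" using assms(7) pos by simp
    show "cam \<in># scaleD c A" and cam_pers: "pers cam = c * persD A"
      using am by (auto simp: scaleD_def cam_def pers_scale)
    show "\<forall>b\<in>#B. c * persD A \<le> linf cam b"
    proof
      fix b assume "b \<in># B"
      then have "snd b \<le> (fst cam + snd cam) / 2"
        using bdB snd_le_bd[of b B] by (simp add: cam_def algebra_simps)
      then have "pers cam \<le> linf cam b" by (rule pers_le_linf_if_below_midpoint)
      then show "c * persD A \<le> linf cam b" using cam_pers by simp
    qed
    show "\<forall>a\<in>#scaleD c A. pers a \<le> c * persD A"
      using assms(7) pers_le_persD[of _ A] by (auto simp: scaleD_def pers_scale)
    show "\<forall>b\<in>#B. pers b \<le> c * persD A"
      using persB pers_le_persD order_trans by blast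
  qed
qed

end
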